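(* Let $\mathcal F$ be a proper filter on $\omega$ and consider the game $\mathfrak G(\mathcal F,\omega,\mathcal F^* )$. Then (1) player I has a winning strategy if and only if $\mathcal F$ is countably generated; (2) player II has a winning strategy if and only if $\mathcal F$ is not $+$-Ramsey.
   Context: A filter on $\omega$ is a family $\mathcal F\subseteq\mathcal P(\omega)$ closed under finite intersections and supersets and containing all cofinite sets; it is proper if all its members are infinite. $\mathcal F^+=\{X\subseteq\omega:\omega\setminus X\notin\mathcal F\}$ and $\mathcal F^*=\mathcal P(\omega)\setminus\mathcal F^+$. $\mathcal F$ is countably generated if there is a countable $\mathcal B\subseteq\mathcal F$ such that every member of $\mathcal F$ contains a member of $\mathcal B$. Game $\mathfrak G(\mathcal X,\omega,\mathcal Z)$: at each stage $k\in\omega$, player I chooses $X_k\in\mathcal X$ and player II responds with $n_k\in X_k$; II wins if $\{n_k:k\in\omega\}\in\mathcal Z$, otherwise I wins. A tree is a set $T$ of finite sequences of natural numbers containing the empty sequence and closed under initial segments; it is an $\mathcal F^+$-tree if for each $\bar s\in T$ there is $X_{\bar s}\in\mathcal F^+$ with $\bar s^\frown n\in T$ for all $n\in X_{\bar s}$; a branch (infinite sequence all of whose initial segments lie in $T$) is in $\mathcal F^+$ if its set of values is in $\mathcal F^+$. $\mathcal F$ is $+$-Ramsey if every $\mathcal F^+$-tree has a branch in $\mathcal F^+$. *)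

theory Defs
  imports Main "HOL-Library.Countable_Set"
begin

definition is_filter :: "nat set set \<Rightarrow> bool" where
  "is_filter F \<longleftrightarrow>
     (\<forall>A B. A \<in> F \<and> B \<in> F \<longrightarrow> A \<inter> B \<in> F) \<and>
     (\<forall>A B. A \<in> F \<and> A \<subseteq> B \<longrightarrow> B \<in> F) \<and>
     (\<forall>A. finite (- A) \<longrightarrow> A \<in> F)"

definition proper_filter :: "nat set set \<Rightarrow> bool" where
  "proper_filter F \<longleftrightarrow> is_filter F \<and> (\<forall>A \<in> F. infinite A)"

definition fplus :: "nat set set \<Rightarrow> nat set set" where
  "fplus F = {X. - X \<notin> F}"

definition fstar :: "nat set set \<Rightarrow> nat set set" where
  "fstar F = UNIV - fplus F"

definition countably_generated :: "nat set set \<Rightarrow> bool" where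
  "countably_generated F \<longleftrightarrow>
     (\<exists>B. countable B \<and> B \<subseteq> F \<and> (\<forall>X \<in> F. \<exists>Y \<in> B. Y \<subseteq> X))"

text \<open>The game G(X, omega, Z): at stage k, I plays X_k in X, II answers n_k in X_k;
  II wins iff the set of all n_k is in Z.
  A strategy for I maps the finite sequence of II's previous moves to I's next move.
  A strategy for II maps the finite sequence of I's moves so far (including the current
  one) to II's answer.\<close>

definition I_strategy :: "nat set set \<Rightarrow> (nat list \<Rightarrow> nat set) \<Rightarrow> bool" where
  "I_strategy \<X> \<sigma> \<longleftrightarrow> (\<forall>s. \<sigma> s \<in> \<X>)"

definition I_winning :: "nat set set \<Rightarrow> nat set set \<Rightarrow> (nat list \<Rightarrow> nat set) \<Rightarrow> bool" where
  "I_winning \<X> \<Z> \<sigma> \<longleftrightarrow> I_strategy \<X> \<sigma> \<and>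
     (\<forall>n :: nat \<Rightarrow> nat. (\<forall>k. n k \<in> \<sigma> (map n [0..<k])) \<longrightarrow> range n \<notin> \<Z>)"

definition II_strategy :: "nat set set \<Rightarrow> (nat set list \<Rightarrow> nat) \<Rightarrow> bool" where
  "II_strategy \<X> \<tau> \<longleftrightarrow>
     (\<forall>Xs X. set Xs \<subseteq> \<X> \<and> X \<in> \<X> \<longrightarrow> \<tau> (Xs @ [X]) \<in> X)"

definition II_winning :: "nat set set \<Rightarrow> nat set set \<Rightarrow> (nat set list \<Rightarrow> nat) \<Rightarrow> bool" where
  "II_winning \<X> \<Z> \<tau> \<longleftrightarrow> II_strategy \<X> \<tau> \<and>
     (\<forall>X :: nat \<Rightarrow> nat set. (\<forall>k. X k \<in> \<X>) \<longrightarrow>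
        range (\<lambda>k. \<tau> (map X [0..<Suc k])) \<in> \<Z>)"

definition is_tree :: "nat list set \<Rightarrow> bool" where
  "is_tree T \<longleftrightarrow> [] \<in> T \<and> (\<forall>s \<in> T. \<forall>k. take k s \<in> T)"

definition fplus_tree :: "nat set set \<Rightarrow> nat list set \<Rightarrow> bool" where
  "fplus_tree F T \<longleftrightarrow> is_tree T \<and>
     (\<forall>s \<in> T. \<exists>X \<in> fplus F. \<forall>n \<in> X. s @ [n] \<in> T)"

definition branch :: "nat list set \<Rightarrow> (nat \<Rightarrow> nat) \<Rightarrow> bool" where
  "branch T b \<longleftrightarrow> (\<forall>k. map b [0..<k] \<in> T)"

definition plus_Ramsey :: "nat set set \<Rightarrow> bool" where
  "plus_Ramsey F \<longleftrightarrow>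
     (\<forall>T. fplus_tree F T \<longrightarrow> (\<exists>b. branch T b \<and> range b \<in> fplus F))"

end

theory Submission
  imports Defs
begin

text \<open>Here \<open>fstar F\<close> is the dual ideal, so II wins a play iff the complement of II's set lies
  in \<open>F\<close>.
  (1) If I enumerates a countable base, II's set meets every basis element, so its complement
  contains none and is not in \<open>F\<close>. Conversely the moves of a winning strategy for I form a base:
  if some \<open>X \<in> F\<close> contained none of them, II could answer outside \<open>X\<close> forever.
  (2) The answers of a strategy \<open>\<tau>\<close> for II to all possible next moves \<open>X \<in> F\<close> form an
  \<open>F\<^sup>+\<close>-set (II must answer \<open>- A\<close> inside \<open>- A\<close>). Fixing for each answer one move producing it,
  II's possible partial plays form an \<open>F\<^sup>+\<close>-tree whose branches are plays against \<open>\<tau>\<close>; so if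
  \<open>\<tau>\<close> wins, no branch is in \<open>F\<^sup>+\<close>. Conversely, given an \<open>F\<^sup>+\<close>-tree without \<open>F\<^sup>+\<close>-branch,
  II answers \<open>X \<in> F\<close> by a successor of the current node inside \<open>X\<close>, which exists because
  \<open>X\<close> meets every \<open>F\<^sup>+\<close>-set; the play is then a branch, hence not in \<open>F\<^sup>+\<close>.\<close>

lemma mem_fstar_iff: "X \<in> fstar F \<longleftrightarrow> - X \<in> F"
  by (simp add: fstar_def fplus_def)

lemma filter_superset: "is_filter F \<Longrightarrow> X \<in> F \<Longrightarrow> X \<subseteq> Y \<Longrightarrow> Y \<in> F"
  unfolding is_filter_def by blast

lemma filter_inter_fplus_nonempty:
  assumes "is_filter F" "X \<in> F" "Y \<in> fplus F"
  shows "X \<inter> Y \<noteq> {}"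
proof
  assume "X \<inter> Y = {}"
  then have "- Y \<in> F" using filter_superset[OF assms(1,2)] by blast
  then show False using assms(3) by (simp add: fplus_def)
qed

lemma ex_seq_history_choice:
  assumes "\<And>s. A s \<noteq> {}"
  shows "\<exists>b. \<forall>k. b k \<in> A (map b [0..<k])"
proof -
  define c where "c s = (SOME m. m \<in> A s)" for s
  have c: "c s \<in> A s" for s
    unfolding c_def using assms by (simp add: some_in_eq)
  define hist where "hist k = rec_nat [] (\<lambda>_ s. s @ [c s]) k" for k
  define b where "b k = c (hist k)" for k
  have "map b [0..<k] = hist k" for k
    by (induction k) (simp_all add: hist_def b_def)
  then have "b k \<in> A (map b [0..<k])" for k
    using c by (simp add: b_def)
  then show ?thesis by blast
qed

definition respond :: "('b list \<Rightarrow> 'a \<Rightarrow> 'b) \<Rightarrow> 'a list \<Rightarrow> 'b list" where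
  "respond h xs = foldl (\<lambda>ys x. ys @ [h ys x]) [] xs"

lemma respond_Nil [simp]: "respond h [] = []"
  by (simp add: respond_def)

lemma respond_snoc [simp]: "respond h (xs @ [x]) = respond h xs @ [h (respond h xs) x]"
  by (simp add: respond_def)

lemma respond_map_upt:
  assumes "\<And>i. b i = h (respond h (map a [0..<i])) (a i)"
  shows "respond h (map a [0..<k]) = map b [0..<k]"
  by (induction k) (simp_all add: assms)

definition tree_of :: "(nat list \<Rightarrow> nat set) \<Rightarrow> nat list set" where
  "tree_of A = {s. \<forall>k < length s. s ! k \<in> A (take k s)}"

lemma Nil_in_tree_of [simp]: "[] \<in> tree_of A"
  by (simp add: tree_of_def)

lemma snoc_in_tree_of_iff: "s @ [n] \<in> tree_of A \<longleftrightarrow> s \<in> tree_of A \<and> n \<in> A s"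
  by (auto simp: tree_of_def nth_append less_Suc_eq)

lemma map_upt_in_tree_of_iff:
  "map b [0..<k] \<in> tree_of A \<longleftrightarrow> (\<forall>i<k. b i \<in> A (map b [0..<i]))"
  by (induction k) (simp_all add: snoc_in_tree_of_iff All_less_Suc conj_commute)

lemma branch_tree_of_iff: "branch (tree_of A) b \<longleftrightarrow> (\<forall>k. b k \<in> A (map b [0..<k]))"
proof -
  have "(\<forall>k. \<forall>i<k. P i) \<longleftrightarrow> (\<forall>k. P k)" for P :: "nat \<Rightarrow> bool"
    using lessI by blast
  then show ?thesis unfolding branch_def map_upt_in_tree_of_iff .
qed

lemma take_in_tree_of: "s \<in> tree_of A \<Longrightarrow> take k s \<in> tree_of A"
  by (simp add: tree_of_def min_def)

lemma is_tree_tree_of: "is_tree (tree_of A)"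
  unfolding is_tree_def by (simp add: take_in_tree_of)

lemma fplus_tree_tree_of:
  assumes "\<And>s. s \<in> tree_of A \<Longrightarrow> A s \<in> fplus F"
  shows "fplus_tree F (tree_of A)"
  unfolding fplus_tree_def
proof (intro conjI ballI is_tree_tree_of)
  fix s assume "s \<in> tree_of A"
  then show "\<exists>X\<in>fplus F. \<forall>n\<in>X. s @ [n] \<in> tree_of A"
    using assms by (intro bexI[of _ "A s"]) (simp_all add: snoc_in_tree_of_iff)
qed

lemma countably_generated_imp_I_winning:
  assumes "is_filter F" "countably_generated F"
  shows "\<exists>\<sigma>. I_winning F (fstar F) \<sigma>"
proof -
  obtain B where B: "countable B" "B \<subseteq> F" "\<forall>X\<in>F. \<exists>Y\<in>B. Y \<subseteq> X"
    using assms(2) unfolding countably_generated_def by blast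
  have "UNIV \<in> F" using assms(1) by (simp add: is_filter_def)
  then have "B \<noteq> {}" using B(3) by blast
  define \<sigma> where "\<sigma> s = from_nat_into B (length s)" for s :: "nat list"
  have "I_strategy F \<sigma>"
    unfolding I_strategy_def \<sigma>_def using from_nat_into[OF \<open>B \<noteq> {}\<close>] B(2) by blast
  moreover have "range n \<notin> fstar F" if n: "\<forall>k. n k \<in> \<sigma> (map n [0..<k])" for n
  proof
    assume "range n \<in> fstar F"
    then obtain Y where "Y \<in> B" "Y \<subseteq> - range n"
      using B(3) by (auto simp: mem_fstar_iff)
    moreover obtain j where "from_nat_into B j = Y" using from_nat_into_surj[OF B(1) \<open>Y \<in> B\<close>] ..
    ultimately show False using n[rule_format, of j] by (auto simp: \<sigma>_def)
  qed
  ultimately show ?thesis unfolding I_winning_def by blast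
qed

lemma I_winning_imp_countably_generated:
  assumes "is_filter F" "I_winning F (fstar F) \<sigma>"
  shows "countably_generated F"
  unfolding countably_generated_def
proof (intro exI conjI ballI)
  show "countable (range \<sigma>)" by simp
  show "range \<sigma> \<subseteq> F" using assms(2) unfolding I_winning_def I_strategy_def by blast
  fix X assume "X \<in> F"
  show "\<exists>Y\<in>range \<sigma>. Y \<subseteq> X"
  proof (rule ccontr)
    assume "\<not> ?thesis"
    then have "\<sigma> s - X \<noteq> {}" for s by blast
    then obtain n where n: "\<forall>k. n k \<in> \<sigma> (map n [0..<k]) - X"
      using ex_seq_history_choice[of "\<lambda>s. \<sigma> s - X"] by blast
    then have "range n \<notin> fstar F" using assms(2) unfolding I_winning_def by blast
    moreover have "X \<subseteq> - range n" using n by blast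
    ultimately show False
      using filter_superset[OF assms(1) \<open>X \<in> F\<close>] by (simp add: mem_fstar_iff)
  qed
qed

lemma fplus_tree_successor_in:
  assumes "is_filter F" "fplus_tree F T" "s \<in> T" "X \<in> F"
  shows "\<exists>m\<in>X. s @ [m] \<in> T"
proof -
  obtain Y where "Y \<in> fplus F" "\<forall>n\<in>Y. s @ [n] \<in> T"
    using assms(2,3) unfolding fplus_tree_def by blast
  with filter_inter_fplus_nonempty[OF assms(1,4)] show ?thesis by blast
qed

lemma not_plus_Ramsey_imp_II_winning:
  assumes "is_filter F" "\<not> plus_Ramsey F"
  shows "\<exists>\<tau>. II_winning F (fstar F) \<tau>"
proof -
  obtain T where T: "fplus_tree F T" and no_branch: "\<forall>b. branch T b \<longrightarrow> range b \<notin> fplus F"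
    using assms(2) unfolding plus_Ramsey_def by blast
  define pick where "pick s X = (SOME m. m \<in> X \<and> s @ [m] \<in> T)" for s X
  have pick: "pick s X \<in> X \<and> s @ [pick s X] \<in> T" if "s \<in> T" "X \<in> F" for s X
    using fplus_tree_successor_in[OF assms(1) T that] unfolding pick_def Bex_def by (rule someI_ex)
  have respond_in_T: "set Xs \<subseteq> F \<Longrightarrow> respond pick Xs \<in> T" for Xs
  proof (induction Xs rule: rev_induct)
    case Nil
    then show ?case using T by (simp add: fplus_tree_def is_tree_def)
  next
    case (snoc X Xs)
    then have "respond pick Xs \<in> T" "X \<in> F" by auto
    then show ?case using pick by simp
  qed
  define \<tau> where "\<tau> Xs = last (respond pick Xs)" for Xs
  have \<tau>_snoc: "\<tau> (Xs @ [X]) = pick (respond pick Xs) X" for Xs X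
    by (simp add: \<tau>_def)
  have "II_strategy F \<tau>"
    unfolding II_strategy_def
  proof (intro allI impI)
    fix Xs X assume "set Xs \<subseteq> F \<and> X \<in> F"
    then show "\<tau> (Xs @ [X]) \<in> X" using pick respond_in_T by (simp add: \<tau>_snoc)
  qed
  moreover have "range (\<lambda>k. \<tau> (map X [0..<Suc k])) \<in> fstar F" if X: "\<forall>k. X k \<in> F" for X
  proof -
    define b where "b k = \<tau> (map X [0..<Suc k])" for k
    have "respond pick (map X [0..<k]) = map b [0..<k]" for k
      by (rule respond_map_upt) (simp add: b_def \<tau>_snoc)
    moreover have "respond pick (map X [0..<k]) \<in> T" for k
      using X by (intro respond_in_T) auto
    ultimately have "branch T b" unfolding branch_def by simp
    then have "range b \<notin> fplus F" using no_branch by blast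
    then show ?thesis unfolding b_def[symmetric] by (simp add: fstar_def)
  qed
  ultimately show ?thesis unfolding II_winning_def by blast
qed

lemma II_answers_fplus:
  assumes "II_strategy F \<tau>" "set Xs \<subseteq> F"
  shows "(\<lambda>X. \<tau> (Xs @ [X])) ` F \<in> fplus F"
proof -
  let ?A = "(\<lambda>X. \<tau> (Xs @ [X])) ` F"
  have "\<tau> (Xs @ [- ?A]) \<in> - ?A" if "- ?A \<in> F"
    using assms that unfolding II_strategy_def by blast
  then show ?thesis unfolding fplus_def by blast
qed

lemma II_winning_imp_not_plus_Ramsey:
  assumes "II_winning F (fstar F) \<tau>"
  shows "\<not> plus_Ramsey F"
proof -
  have strategy: "II_strategy F \<tau>" using assms unfolding II_winning_def by blast
  define move where "move Xs n = (SOME X. X \<in> F \<and> \<tau> (Xs @ [X]) = n)" for Xs n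
  have move: "move Xs n \<in> F \<and> \<tau> (Xs @ [move Xs n]) = n" if "n \<in> (\<lambda>X. \<tau> (Xs @ [X])) ` F" for Xs n
  proof -
    have "\<exists>X. X \<in> F \<and> \<tau> (Xs @ [X]) = n" using that by blast
    then show ?thesis unfolding move_def by (rule someI_ex)
  qed
  define A where "A s = (\<lambda>X. \<tau> (respond move s @ [X])) ` F" for s
  have moves_in_F: "s \<in> tree_of A \<Longrightarrow> set (respond move s) \<subseteq> F" for s
  proof (induction s rule: rev_induct)
    case (snoc n s)
    then have "s \<in> tree_of A" and "n \<in> A s"
      by (simp_all add: snoc_in_tree_of_iff)
    moreover have "move (respond move s) n \<in> F"
      using move[OF \<open>n \<in> A s\<close>[unfolded A_def]] by simp
    ultimately show ?case using snoc.IH by simp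
  qed simp
  have "A s \<in> fplus F" if "s \<in> tree_of A" for s
    using II_answers_fplus[OF strategy moves_in_F[OF that]] by (simp add: A_def)
  then have "fplus_tree F (tree_of A)" by (rule fplus_tree_tree_of)
  moreover have "range b \<notin> fplus F" if "branch (tree_of A) b" for b
  proof -
    define X where "X k = move (respond move (map b [0..<k])) (b k)" for k
    have respond_b: "respond move (map b [0..<k]) = map X [0..<k]" for k
      by (rule respond_map_upt) (simp add: X_def)
    have X_move: "X k \<in> F \<and> \<tau> (map X [0..<k] @ [X k]) = b k" for k
    proof -
      have "b k \<in> A (map b [0..<k])"
        using that by (simp add: branch_tree_of_iff)
      note move[OF this[unfolded A_def]]
      moreover have "X k = move (respond move (map b [0..<k])) (b k)"
        by (simp add: X_def)
      ultimately show ?thesis unfolding respond_b by simp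
    qed
    then have "range (\<lambda>k. \<tau> (map X [0..<Suc k])) \<in> fstar F"
      using assms unfolding II_winning_def by blast
    moreover have "(\<lambda>k. \<tau> (map X [0..<Suc k])) = b"
      using X_move by (simp add: fun_eq_iff)
    ultimately have "range b \<in> fstar F" by (simp only:)
    then show ?thesis by (simp add: fstar_def)
  qed
  ultimately show ?thesis unfolding plus_Ramsey_def by blast
qed

theorem theorem2p9:
  fixes F :: "nat set set"
  assumes "proper_filter F"
  shows "((\<exists>\<sigma>. I_winning F (fstar F) \<sigma>) \<longleftrightarrow> countably_generated F) \<and>
         ((\<exists>\<tau>. II_winning F (fstar F) \<tau>) \<longleftrightarrow> \<not> plus_Ramsey F)"
proof
  have filter: "is_filter F" using assms unfolding proper_filter_def by blast
  show "(\<exists>\<sigma>. I_winning F (fstar F) \<sigma>) \<longleftrightarrow> countably_generated F"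
    using countably_generated_imp_I_winning[OF filter] I_winning_imp_countably_generated[OF filter]
    by blast
  show "(\<exists>\<tau>. II_winning F (fstar F) \<tau>) \<longleftrightarrow> \<not> plus_Ramsey F"
    using not_plus_Ramsey_imp_II_winning[OF filter] II_winning_imp_not_plus_Ramsey by blast
qed

end
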